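(* Let $f:\mathbb{R}^d\times\mathcal{X}\to\mathbb{R}$ be differentiable in $\theta$, with $\mathcal{X}$ a subset of a Euclidean space and $\sup_{x\in\mathcal{X}}\Vert x\Vert\le D<\infty$. Assume (A1): there are $K_1,K_2>0$ with $\Vert\nabla f(\theta,x)-\nabla f(\hat\theta,\hat x)\Vert\le K_1\Vert\theta-\hat\theta\Vert+K_2\Vert x-\hat x\Vert(\Vert\theta\Vert+\Vert\hat\theta\Vert+1)$ for all $\theta,\hat\theta\in\mathbb{R}^d$, $x,\hat x\in\mathcal{X}$; (A3): there are $m>0$, $K>0$ with $\langle\nabla f(\theta_1,x)-\nabla f(\theta_2,x),\theta_1-\theta_2\rangle\ge m\Vert\theta_1-\theta_2\Vert^2-K$ for all $\theta_1,\theta_2,x$; (N): $(\xi_k)_{k\ge1}$ are i.i.d. random vectors in $\mathbb{R}^d$, independent of the minibatches, with a continuous everywhere-positive density, $\mathbb{E}\xi_1=0$ and $\sigma^2:=\mathbb{E}\Vert\xi_1\Vert^2<\infty$. Let $\hat x_1,\dots,\hat x_n\in\mathcal{X}$, $b\in\{1,\dots,n\}$, $(\Omega_k)$ i.i.d. uniformly random $b$-subsets of $\{1,\dots,n\}$, and let $\hat P$ be the transition kernel of $\hat\theta_k=\hat\theta_{k-1}-\frac\eta b\sum_{i\in\Omega_k}\nabla f(\hat\theta_{k-1},\hat x_i)+\eta\xi_k$. Let $\hat\theta_*$ be a minimizer of $\frac1n\sum_{i=1}^nf(\theta,\hat x_i)$ and $\hat V(\theta):=1+\Vert\theta-\hat\theta_*\Vert^2$.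 If $\eta<\min\left\{\frac1m,\frac{m}{K_1^2+64D^2K_2^2}\right\}$, then for all $\theta\in\mathbb{R}^d$, $$(\hat P\hat V)(\theta)\le(1-m\eta)\hat V(\theta)+2m\eta-\eta^2K_1^2-56\eta^2D^2K_2^2+64\eta^2D^2K_2^2\Vert\hat\theta_*\Vert^2+2\eta K+\eta^2\sigma^2.$$
   Context: $(\hat P\hat V)(\theta)=\mathbb{E}[\hat V(\hat\theta_1)\mid\hat\theta_0=\theta]$. *)

theory Defs
  imports "HOL-Probability.Probability"
begin

definition grad :: "(real^'d \<Rightarrow> 'x \<Rightarrow> real) \<Rightarrow> real^'d \<Rightarrow> 'x \<Rightarrow> real^'d" where
  "grad f t x = (SOME g. ((\<lambda>s. f s x) has_derivative (\<lambda>h. g \<bullet> h)) (at t))"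

definition bsubsets :: "nat \<Rightarrow> nat \<Rightarrow> nat set set" where
  "bsubsets n b = {S. S \<subseteq> {1..n} \<and> card S = b}"

definition sgld_step ::
  "(real^'d \<Rightarrow> 'x \<Rightarrow> real) \<Rightarrow> (nat \<Rightarrow> 'x) \<Rightarrow> real \<Rightarrow> nat \<Rightarrow> real^'d \<Rightarrow> nat set \<Rightarrow> real^'d \<Rightarrow> real^'d" where
  "sgld_step f xs \<eta> b t Om z =
     t - (\<eta> / real b) *\<^sub>R (\<Sum>i\<in>Om. grad f t (xs i)) + \<eta> *\<^sub>R z"

definition kernel_apply ::
  "(real^'d \<Rightarrow> 'x \<Rightarrow> real) \<Rightarrow> (nat \<Rightarrow> 'x) \<Rightarrow> nat \<Rightarrow> nat \<Rightarrow> real \<Rightarrow> (real^'d) measure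
     \<Rightarrow> (real^'d \<Rightarrow> real) \<Rightarrow> real^'d \<Rightarrow> real" where
  "kernel_apply f xs n b \<eta> M V t =
     (\<integral>w. V (sgld_step f xs \<eta> b t (fst w) (snd w))
        \<partial>(measure_pmf (pmf_of_set (bsubsets n b)) \<Otimes>\<^sub>M M))"

end

theory Submission
  imports Defs
begin

text \<open>Write \<open>s = \<theta> - \<theta>\<^sub>*\<close> and \<open>G\<^sub>\<Omega>\<close> for the mean gradient over the minibatch \<open>\<Omega>\<close>.
  The noise is centred and independent of the minibatch, so
  \<open>(P V)(\<theta>) = 1 + \<eta>\<^sup>2\<sigma>\<^sup>2 + E |s - \<eta> G\<^sub>\<Omega>|\<^sup>2\<close>. A uniform minibatch mean is an unbiased
  estimate of the full mean gradient \<open>G\<close>, hence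
  \<open>E |s - \<eta> G\<^sub>\<Omega>|\<^sup>2 = |s - \<eta> G|\<^sup>2 + \<eta>\<^sup>2 E |G\<^sub>\<Omega> - G|\<^sup>2\<close>.
  By (A1) all gradients at \<open>\<theta>\<close> lie within \<open>2 D K\<^sub>2 (2|\<theta>| + 1)\<close> of each other, which bounds
  the variance term. The full gradient vanishes at the minimiser, so (A1) and (A3) give
  \<open>|G| \<le> K\<^sub>1 |s|\<close> and \<open>\<langle>s, G\<rangle> \<ge> m |s|\<^sup>2 - K\<close>, which bound the drift term. Finally
  \<open>\<eta> (K\<^sub>1\<^sup>2 + 64 D\<^sup>2 K\<^sub>2\<^sup>2) \<le> m\<close> absorbs the quadratic terms in \<open>\<eta>\<close>.\<close>

lemma grad_has_derivative:
  assumes "(\<lambda>s. f s x) differentiable (at t)"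
  shows "((\<lambda>s. f s x) has_derivative (\<lambda>h. grad f t x \<bullet> h)) (at t)"
proof -
  obtain L where L: "((\<lambda>s. f s x) has_derivative L) (at t)"
    using assms unfolding differentiable_def by blast
  have "L = (\<lambda>h. adjoint L 1 \<bullet> h)"
    using adjoint_works[OF has_derivative_linear[OF L]] by (simp add: inner_commute fun_eq_iff)
  with L have "\<exists>g. ((\<lambda>s. f s x) has_derivative (\<lambda>h. g \<bullet> h)) (at t)"
    by metis
  then show ?thesis
    unfolding grad_def by (rule someI_ex)
qed

lemma sum_grad_eq_0_if_minimum:
  assumes "\<forall>i\<in>I. (\<lambda>s. f s (xs i)) differentiable (at t0)"
    and "\<forall>t. (\<Sum>i\<in>I. f t0 (xs i)) \<le> (\<Sum>i\<in>I. f t (xs i))"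
  shows "(\<Sum>i\<in>I. grad f t0 (xs i)) = 0"
proof -
  let ?g = "\<Sum>i\<in>I. grad f t0 (xs i)"
  have "((\<lambda>t. \<Sum>i\<in>I. f t (xs i)) has_derivative (\<lambda>h. ?g \<bullet> h)) (at t0)"
    unfolding inner_sum_left using assms(1) by (intro has_derivative_sum grad_has_derivative) auto
  then have "(\<lambda>h. ?g \<bullet> h) = (\<lambda>h. 0)"
    by (rule has_derivative_local_min) (use assms(2) in auto)
  then have "?g \<bullet> ?g = 0"
    by metis
  then show ?thesis
    by simp
qed

definition average :: "'i set \<Rightarrow> ('i \<Rightarrow> 'a::real_vector) \<Rightarrow> 'a" where
  "average A v = (1 / real (card A)) *\<^sub>R sum v A"

lemma average_cong: "A = B \<Longrightarrow> (\<And>x. x \<in> B \<Longrightarrow> f x = g x) \<Longrightarrow> average A f = average B g"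
  unfolding average_def by (auto intro!: sum.cong)

lemma sum_sub_average_eq_0:
  assumes "finite A" "A \<noteq> {}"
  shows "(\<Sum>i\<in>A. v i - average A v) = 0"
  using assms by (simp add: average_def sum_subtractf sum_constant_scaleR)

lemma norm_average_sub_le:
  assumes "finite A" "A \<noteq> {}" "\<forall>i\<in>A. norm (v i - w) \<le> c"
  shows "norm (average A v - w) \<le> c"
proof -
  have "average A v - w = (1 / real (card A)) *\<^sub>R (\<Sum>i\<in>A. v i - w)"
    using assms by (simp add: average_def sum_subtractf scaleR_diff_right sum_constant_scaleR)
  also have "norm \<dots> \<le> (1 / real (card A)) * (\<Sum>i\<in>A. norm (v i - w))"
    by (simp add: norm_sum divide_right_mono)
  also have "\<dots> \<le> (1 / real (card A)) * (\<Sum>i\<in>A. c)"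
    using assms(3) by (intro mult_left_mono sum_mono) auto
  also have "\<dots> = c"
    using assms by simp
  finally show ?thesis .
qed

lemma norm_average_sub_average_le:
  assumes "finite A" "A \<noteq> {}" "finite B" "B \<noteq> {}"
    and "\<forall>i\<in>A. \<forall>j\<in>B. norm (v i - v j) \<le> c"
  shows "norm (average A v - average B v) \<le> c"
proof -
  have "norm (v i - average B v) \<le> c" if "i \<in> A" for i
  proof -
    have "\<forall>j\<in>B. norm (v j - v i) \<le> c"
      using assms(5) that by (metis norm_minus_commute)
    then show ?thesis
      using norm_average_sub_le[of B v "v i" c] assms(3,4) by (simp add: norm_minus_commute)
  qed
  then show ?thesis
    using norm_average_sub_le[of A v "average B v" c] assms by simp
qed

lemma average_le_const:
  fixes v :: "'i \<Rightarrow> real"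
  assumes "finite A" "A \<noteq> {}" "\<forall>i\<in>A. v i \<le> c"
  shows "average A v \<le> c"
proof -
  have "(1 / real (card A)) * (\<Sum>i\<in>A. v i) \<le> (1 / real (card A)) * (\<Sum>i\<in>A. c)"
    using assms(3) by (intro mult_left_mono sum_mono) auto
  then show ?thesis
    using assms by (simp add: average_def)
qed

lemma inner_average_ge:
  fixes v :: "'i \<Rightarrow> 'a::real_inner"
  assumes "finite A" "A \<noteq> {}" "\<forall>i\<in>A. a \<bullet> v i \<ge> c"
  shows "a \<bullet> average A v \<ge> c"
proof -
  have "(1 / real (card A)) * (\<Sum>i\<in>A. c) \<le> (1 / real (card A)) * (\<Sum>i\<in>A. a \<bullet> v i)"
    using assms(3) by (intro mult_left_mono sum_mono) auto
  then show ?thesis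
    using assms by (simp add: average_def inner_sum_right)
qed

lemma norm_add_sq:
  fixes a b :: "'a::real_inner"
  shows "(norm (a + b))\<^sup>2 = (norm a)\<^sup>2 + 2 * (a \<bullet> b) + (norm b)\<^sup>2"
  unfolding power2_norm_eq_inner by (simp add: inner_add_left inner_add_right inner_commute)

lemma sum_norm_sq_add_centered:
  fixes v :: "'i \<Rightarrow> 'a::real_inner"
  assumes "sum v S = 0"
  shows "(\<Sum>x\<in>S. (norm (a + v x))\<^sup>2) = real (card S) * (norm a)\<^sup>2 + (\<Sum>x\<in>S. (norm (v x))\<^sup>2)"
  using assms by (simp add: norm_add_sq sum.distrib flip: sum_distrib_left inner_sum_right)

lemma average_norm_sq_step_le:
  fixes s :: "'a::real_inner" and G :: "'i \<Rightarrow> 'a"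
  assumes S: "finite S" "S \<noteq> {}"
    and spread: "\<forall>B\<in>S. norm (G B - average S G) \<le> c"
    and lipschitz: "norm (average S G) \<le> L * norm s"
    and monotone: "s \<bullet> average S G \<ge> m * (norm s)\<^sup>2 - K"
    and "\<eta> \<ge> 0"
  shows "average S (\<lambda>B. (norm (s - \<eta> *\<^sub>R G B))\<^sup>2)
    \<le> (1 - 2 * \<eta> * m + \<eta>\<^sup>2 * L\<^sup>2) * (norm s)\<^sup>2 + 2 * \<eta> * K + \<eta>\<^sup>2 * c\<^sup>2"
proof -
  define Gbar where "Gbar = average S G"
  define drift where "drift = s - \<eta> *\<^sub>R Gbar"
  define noise where "noise B = \<eta> *\<^sub>R (Gbar - G B)" for B
  have "(\<Sum>B\<in>S. noise B) = - \<eta> *\<^sub>R (\<Sum>B\<in>S. G B - Gbar)"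
    by (simp add: noise_def scaleR_sum_right sum_negf flip: scaleR_minus_right)
  then have "(\<Sum>B\<in>S. noise B) = 0"
    using sum_sub_average_eq_0[OF S, of G] by (simp add: Gbar_def)
  then have "(\<Sum>B\<in>S. (norm (s - \<eta> *\<^sub>R G B))\<^sup>2) = real (card S) * (norm drift)\<^sup>2 + (\<Sum>B\<in>S. (norm (noise B))\<^sup>2)"
    using sum_norm_sq_add_centered[of noise S drift] by (simp add: drift_def noise_def algebra_simps)
  then have "average S (\<lambda>B. (norm (s - \<eta> *\<^sub>R G B))\<^sup>2) = (norm drift)\<^sup>2 + average S (\<lambda>B. (norm (noise B))\<^sup>2)"
    using S by (simp add: average_def field_simps)
  also have "average S (\<lambda>B. (norm (noise B))\<^sup>2) \<le> \<eta>\<^sup>2 * c\<^sup>2"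
  proof -
    have "(norm (noise B))\<^sup>2 \<le> \<eta>\<^sup>2 * c\<^sup>2" if "B \<in> S" for B
      using spread that \<open>\<eta> \<ge> 0\<close> norm_minus_commute[of Gbar "G B"] unfolding Gbar_def noise_def
      by (auto simp: power_mult_distrib intro!: mult_left_mono power_mono)
    then show ?thesis
      using S by (simp add: average_le_const)
  qed
  also have "(norm drift)\<^sup>2 \<le> (1 - 2 * \<eta> * m + \<eta>\<^sup>2 * L\<^sup>2) * (norm s)\<^sup>2 + 2 * \<eta> * K"
  proof -
    have "(norm drift)\<^sup>2 = (norm s)\<^sup>2 - 2 * \<eta> * (s \<bullet> Gbar) + \<eta>\<^sup>2 * (norm Gbar)\<^sup>2"
      using norm_add_sq[of s "- \<eta> *\<^sub>R Gbar"] by (simp add: drift_def power_mult_distrib)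
    moreover have "\<eta>\<^sup>2 * (norm Gbar)\<^sup>2 \<le> \<eta>\<^sup>2 * (L\<^sup>2 * (norm s)\<^sup>2)"
      using lipschitz norm_ge_zero[of Gbar] unfolding Gbar_def
      by (intro mult_left_mono) (auto simp flip: power_mult_distrib intro!: power_mono)
    moreover have "2 * \<eta> * (m * (norm s)\<^sup>2 - K) \<le> 2 * \<eta> * (s \<bullet> Gbar)"
      using monotone \<open>\<eta> \<ge> 0\<close> unfolding Gbar_def by (intro mult_left_mono) auto
    ultimately show ?thesis
      by (simp add: algebra_simps)
  qed
  finally show ?thesis
    by simp
qed

lemma card_subsets_containing:
  assumes "finite A" "i \<in> A" "1 \<le> k"
  shows "card {B. B \<subseteq> A \<and> card B = k \<and> i \<in> B} = (card A - 1) choose (k - 1)"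
proof -
  have "{B. B \<subseteq> A \<and> card B = k \<and> i \<in> B} = insert i ` {C. C \<subseteq> A - {i} \<and> card C = k - 1}"
  proof (intro equalityI subsetI)
    fix B assume B: "B \<in> {B. B \<subseteq> A \<and> card B = k \<and> i \<in> B}"
    then have "finite B"
      using assms(1) finite_subset by blast
    with B show "B \<in> insert i ` {C. C \<subseteq> A - {i} \<and> card C = k - 1}"
      by (intro image_eqI[of _ _ "B - {i}"]) auto
  next
    fix B assume "B \<in> insert i ` {C. C \<subseteq> A - {i} \<and> card C = k - 1}"
    then obtain C where "C \<subseteq> A - {i}" "card C = k - 1" "B = insert i C"
      by blast
    moreover have "finite C" "i \<notin> C"
      using \<open>C \<subseteq> A - {i}\<close> assms(1) finite_subset by auto
    ultimately show "B \<in> {B. B \<subseteq> A \<and> card B = k \<and> i \<in> B}"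
      using assms by auto
  qed
  moreover have "inj_on (insert i) {C. C \<subseteq> A - {i} \<and> card C = k - 1}"
    by (rule inj_onI) auto
  ultimately show ?thesis
    using assms by (simp add: card_image n_subsets)
qed

lemma finite_bsubsets: "finite (bsubsets n b)"
  unfolding bsubsets_def by (rule finite_subset[of _ "Pow {1..n}"]) auto

lemma card_bsubsets: "card (bsubsets n b) = n choose b"
  unfolding bsubsets_def using n_subsets[of "{1..n}" b] by simp

lemma bsubsets_nonempty:
  assumes "b \<le> n"
  shows "bsubsets n b \<noteq> {}"
proof -
  have "{1..b} \<in> bsubsets n b"
    using assms by (simp add: bsubsets_def)
  then show ?thesis
    by blast
qed

lemma sum_bsubsets_sum:
  fixes v :: "nat \<Rightarrow> 'a::real_vector"
  assumes "1 \<le> b"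
  shows "(\<Sum>B\<in>bsubsets n b. \<Sum>i\<in>B. v i) = real ((n - 1) choose (b - 1)) *\<^sub>R (\<Sum>i=1..n. v i)"
proof -
  have "(\<Sum>B\<in>bsubsets n b. \<Sum>i\<in>B. v i) = (\<Sum>B\<in>bsubsets n b. \<Sum>i\<in>{i\<in>{1..n}. i \<in> B}. v i)"
    by (rule sum.cong) (auto simp: bsubsets_def intro!: sum.cong)
  also have "\<dots> = (\<Sum>i=1..n. \<Sum>B\<in>{B\<in>bsubsets n b. i \<in> B}. v i)"
    by (rule sum.swap_restrict) (auto simp: finite_bsubsets)
  also have "\<dots> = (\<Sum>i=1..n. real ((n - 1) choose (b - 1)) *\<^sub>R v i)"
    using card_subsets_containing[of "{1..n}" _ b] assms
    by (intro sum.cong) (auto simp: bsubsets_def sum_constant_scaleR)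
  finally show ?thesis
    by (simp add: scaleR_sum_right)
qed

lemma average_bsubsets_average:
  fixes v :: "nat \<Rightarrow> 'a::real_vector"
  assumes "1 \<le> b" "b \<le> n"
  shows "average (bsubsets n b) (\<lambda>B. average B v) = average {1..n} v"
proof -
  have "real b * real (n choose b) = real n * real ((n - 1) choose (b - 1))"
    using times_binomial_minus1_eq[of b n] assms by (simp flip: of_nat_mult)
  then have "real ((n - 1) choose (b - 1)) / (real (n choose b) * real b) = 1 / real n"
    using assms by (simp add: field_simps)
  moreover have "(\<Sum>B\<in>bsubsets n b. average B v) = (1 / real b) *\<^sub>R (\<Sum>B\<in>bsubsets n b. sum v B)"
    by (simp add: average_def bsubsets_def scaleR_sum_right)
  ultimately show ?thesis
    using assms by (simp add: average_def sum_bsubsets_sum card_bsubsets)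
qed

lemma average_bsubset:
  assumes "B \<in> bsubsets n b"
  shows "average B v = (1 / real b) *\<^sub>R sum v B"
  using assms by (simp add: average_def bsubsets_def)

lemma
  fixes M :: "'a::euclidean_space measure"
  assumes "prob_space M" "sets M = sets borel"
    and "integrable M (\<lambda>z. z)" "(\<integral>z. z \<partial>M) = 0" "integrable M (\<lambda>z. (norm z)\<^sup>2)"
  shows integrable_norm_sq_add_noise: "integrable M (\<lambda>z. (norm (a + \<eta> *\<^sub>R z))\<^sup>2)"
    and integral_norm_sq_add_noise:
      "(\<integral>z. (norm (a + \<eta> *\<^sub>R z))\<^sup>2 \<partial>M) = (norm a)\<^sup>2 + \<eta>\<^sup>2 * (\<integral>z. (norm z)\<^sup>2 \<partial>M)"
proof -
  interpret prob_space M by fact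
  have expand: "(norm (a + \<eta> *\<^sub>R z))\<^sup>2 = (norm a)\<^sup>2 + (2 * \<eta> * (a \<bullet> z) + \<eta>\<^sup>2 * (norm z)\<^sup>2)" for z
    by (simp add: norm_add_sq power_mult_distrib)
  have integrable_terms: "integrable M (\<lambda>z. 2 * \<eta> * (a \<bullet> z) + \<eta>\<^sup>2 * (norm z)\<^sup>2)"
    using assms(3,5) by (intro Bochner_Integration.integrable_add integrable_mult_right integrable_inner_right)
  show "integrable M (\<lambda>z. (norm (a + \<eta> *\<^sub>R z))\<^sup>2)"
    unfolding expand by (rule Bochner_Integration.integrable_add[OF integrable_const integrable_terms])
  have "(\<integral>z. a \<bullet> z \<partial>M) = 0"
    using assms(3,4) by simp
  then show "(\<integral>z. (norm (a + \<eta> *\<^sub>R z))\<^sup>2 \<partial>M) = (norm a)\<^sup>2 + \<eta>\<^sup>2 * (\<integral>z. (norm z)\<^sup>2 \<partial>M)"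
    unfolding expand using integrable_inner_right[OF assms(3), of a] assms(5)
    by (simp add: prob_space)
qed

lemma kernel_apply_sq_dist:
  fixes M :: "(real^'d) measure"
  assumes M: "prob_space M" "sets M = sets borel"
    and mean0: "integrable M (\<lambda>z. z)" "(\<integral>z. z \<partial>M) = 0"
    and var: "integrable M (\<lambda>z. (norm z)\<^sup>2)"
    and "b \<le> n"
  shows "kernel_apply f xs n b \<eta> M (\<lambda>s. 1 + (norm (s - c))\<^sup>2) t
    = 1 + average (bsubsets n b) (\<lambda>B. (norm (t - c - \<eta> *\<^sub>R average B (\<lambda>i. grad f t (xs i))))\<^sup>2)
      + \<eta>\<^sup>2 * (\<integral>z. (norm z)\<^sup>2 \<partial>M)"
proof -
  let ?S = "bsubsets n b"
  let ?P = "measure_pmf (pmf_of_set ?S)"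
  let ?\<sigma> = "\<integral>z. (norm z)\<^sup>2 \<partial>M"
  define A where "A B = t - (\<eta> / real b) *\<^sub>R (\<Sum>i\<in>B. grad f t (xs i)) - c" for B
  define V where "V w = 1 + (norm (A (fst w) + \<eta> *\<^sub>R snd w))\<^sup>2" for w
  have S: "finite ?S" "?S \<noteq> {}"
    using finite_bsubsets bsubsets_nonempty \<open>b \<le> n\<close> by auto
  interpret M: prob_space M by fact
  interpret pair_sigma_finite ?P M
    by (intro pair_sigma_finite.intro prob_space_imp_sigma_finite M(1) measure_pmf.prob_space_axioms)
  have V_integrable: "integrable M (\<lambda>z. V (B, z))" for B
    unfolding V_def using integrable_norm_sq_add_noise[OF M mean0 var] by simp
  have V_integral: "(\<integral>z. V (B, z) \<partial>M) = 1 + (norm (A B))\<^sup>2 + \<eta>\<^sup>2 * ?\<sigma>" for B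
    unfolding V_def using integrable_norm_sq_add_noise[OF M mean0 var] integral_norm_sq_add_noise[OF M mean0 var]
    by (simp add: M.prob_space)
  have "A \<in> borel_measurable ?P"
    by (simp add: measurable_cong_sets[OF sets_measure_pmf_count_space refl])
  then have "V \<in> borel_measurable (?P \<Otimes>\<^sub>M M)"
    unfolding V_def using M(2) by measurable
  then have "integrable (?P \<Otimes>\<^sub>M M) V"
    by (rule Fubini_integrable) (auto intro: integrable_measure_pmf_finite simp: S V_integrable)
  then have "(\<integral>w. V w \<partial>(?P \<Otimes>\<^sub>M M)) = (\<integral>B. 1 + (norm (A B))\<^sup>2 + \<eta>\<^sup>2 * ?\<sigma> \<partial>?P)"
    using integral_fst'[of V] by (simp add: V_integral)
  also have "\<dots> = 1 + average ?S (\<lambda>B. (norm (A B))\<^sup>2) + \<eta>\<^sup>2 * ?\<sigma>"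
    using S by (simp add: integral_pmf_of_set average_def sum.distrib field_simps)
  also have "average ?S (\<lambda>B. (norm (A B))\<^sup>2)
      = average ?S (\<lambda>B. (norm (t - c - \<eta> *\<^sub>R average B (\<lambda>i. grad f t (xs i))))\<^sup>2)"
    by (rule average_cong) (simp_all add: A_def average_bsubset algebra_simps)
  finally show ?thesis
    unfolding kernel_apply_def V_def A_def sgld_step_def by (simp add: algebra_simps)
qed

lemma norm_grad_sub_grad_le:
  assumes A1: "\<forall>t1 t2 x1 x2. x1 \<in> X \<longrightarrow> x2 \<in> X \<longrightarrow>
          norm (grad f t1 x1 - grad f t2 x2)
            \<le> K1 * norm (t1 - t2) + K2 * norm (x1 - x2) * (norm t1 + norm t2 + 1)"
    and bounded: "\<forall>x\<in>X. norm x \<le> D" and "K2 \<ge> 0"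
    and X: "x1 \<in> X" "x2 \<in> X"
  shows "norm (grad f t x1 - grad f t x2) \<le> 2 * D * K2 * (2 * norm t + 1)"
proof -
  have "norm x1 \<le> D" "norm x2 \<le> D"
    using bounded X by auto
  then have "norm (x1 - x2) \<le> 2 * D"
    using norm_triangle_ineq4[of x1 x2] by linarith
  then have "K2 * norm (x1 - x2) * (2 * norm t + 1) \<le> K2 * (2 * D) * (2 * norm t + 1)"
    using \<open>K2 \<ge> 0\<close> by (intro mult_right_mono mult_left_mono) auto
  moreover have "norm (grad f t x1 - grad f t x2) \<le> K2 * norm (x1 - x2) * (2 * norm t + 1)"
    using A1 X by (metis diff_self norm_zero mult_zero_right add_0 mult_2)
  ultimately show ?thesis
    by (simp add: mult_ac)
qed

lemma norm_average_grad_sub_le: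
  assumes A1: "\<forall>t1 t2 x1 x2. x1 \<in> X \<longrightarrow> x2 \<in> X \<longrightarrow>
          norm (grad f t1 x1 - grad f t2 x2)
            \<le> K1 * norm (t1 - t2) + K2 * norm (x1 - x2) * (norm t1 + norm t2 + 1)"
    and bounded: "\<forall>x\<in>X. norm x \<le> D" and "K2 \<ge> 0"
    and xs_in: "\<forall>i\<in>{1..n}. xs i \<in> X"
    and B: "B \<in> bsubsets n b" "1 \<le> b"
  shows "norm (average B (\<lambda>i. grad f t (xs i)) - average {1..n} (\<lambda>i. grad f t (xs i)))
    \<le> 2 * D * K2 * (2 * norm t + 1)"
proof (rule norm_average_sub_average_le)
  show "finite B" "B \<noteq> {}" "{1..n} \<noteq> {}"
    using B finite_subset[of B "{1..n}"] by (fastforce simp: bsubsets_def)+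
  show "\<forall>i\<in>B. \<forall>j\<in>{1..n}. norm (grad f t (xs i) - grad f t (xs j)) \<le> 2 * D * K2 * (2 * norm t + 1)"
    using B xs_in norm_grad_sub_grad_le[OF A1 bounded \<open>K2 \<ge> 0\<close>] by (auto simp: bsubsets_def)
qed simp

lemma
  assumes A1: "\<forall>t1 t2 x1 x2. x1 \<in> X \<longrightarrow> x2 \<in> X \<longrightarrow>
          norm (grad f t1 x1 - grad f t2 x2)
            \<le> K1 * norm (t1 - t2) + K2 * norm (x1 - x2) * (norm t1 + norm t2 + 1)"
    and A3: "\<forall>t1 t2 x. x \<in> X \<longrightarrow>
          (grad f t1 x - grad f t2 x) \<bullet> (t1 - t2) \<ge> m * (norm (t1 - t2))\<^sup>2 - K"
    and I: "finite I" "I \<noteq> {}" "\<forall>i\<in>I. xs i \<in> X"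
    and critical: "(\<Sum>i\<in>I. grad f t0 (xs i)) = 0"
  shows norm_average_grad_le: "norm (average I (\<lambda>i. grad f t (xs i))) \<le> K1 * norm (t - t0)"
    and inner_average_grad_ge:
      "(t - t0) \<bullet> average I (\<lambda>i. grad f t (xs i)) \<ge> m * (norm (t - t0))\<^sup>2 - K"
proof -
  have average_eq: "average I (\<lambda>i. grad f t (xs i)) = average I (\<lambda>i. grad f t (xs i) - grad f t0 (xs i))"
    using critical by (simp add: average_def sum_subtractf)
  have "\<forall>i\<in>I. norm ((grad f t (xs i) - grad f t0 (xs i)) - 0) \<le> K1 * norm (t - t0)"
    using A1 I(3) by fastforce
  then show "norm (average I (\<lambda>i. grad f t (xs i))) \<le> K1 * norm (t - t0)"
    using norm_average_sub_le[OF I(1,2), of _ 0] average_eq by simp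
  have "\<forall>i\<in>I. (t - t0) \<bullet> (grad f t (xs i) - grad f t0 (xs i)) \<ge> m * (norm (t - t0))\<^sup>2 - K"
    using A3 I(3) by (simp add: inner_commute)
  then show "(t - t0) \<bullet> average I (\<lambda>i. grad f t (xs i)) \<ge> m * (norm (t - t0))\<^sup>2 - K"
    using inner_average_ge[OF I(1,2)] average_eq by simp
qed

lemma two_norm_add_one_sq_le:
  fixes t t0 :: "'a::real_normed_vector"
  shows "(2 * norm t + 1)\<^sup>2 \<le> 16 * (norm (t - t0))\<^sup>2 + 16 * (norm t0)\<^sup>2 + 2"
proof -
  have "norm t \<le> norm (t - t0) + norm t0"
    using norm_triangle_ineq[of "t - t0" t0] by simp
  then have "(norm t)\<^sup>2 \<le> (norm (t - t0) + norm t0)\<^sup>2"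
    by (simp add: power_mono)
  moreover have "(2 * x + 1)\<^sup>2 \<le> 8 * x\<^sup>2 + 2" for x :: real
    using zero_le_power2[of "2 * x - 1"] by (simp add: power2_eq_square algebra_simps)
  moreover have "(y + z)\<^sup>2 \<le> 2 * y\<^sup>2 + 2 * z\<^sup>2" for y z :: real
    using zero_le_power2[of "y - z"] by (simp add: power2_eq_square algebra_simps)
  ultimately show ?thesis
    by (smt (verit))
qed

theorem lemmaD3:
  fixes f :: "real^'d \<Rightarrow> 'x::euclidean_space \<Rightarrow> real"
    and X :: "'x set" and D K1 K2 m K \<eta> :: real
    and p :: "real^'d \<Rightarrow> real"
    and xs :: "nat \<Rightarrow> 'x" and n b :: nat
    and theta_star :: "real^'d"
  assumes diff: "\<forall>x\<in>X. \<forall>t. (\<lambda>s. f s x) differentiable (at t)"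
    and bounded: "\<forall>x\<in>X. norm x \<le> D"
    and K1: "K1 > 0" and K2: "K2 > 0"
    and A1: "\<forall>t1 t2 x1 x2. x1 \<in> X \<longrightarrow> x2 \<in> X \<longrightarrow>
          norm (grad f t1 x1 - grad f t2 x2)
            \<le> K1 * norm (t1 - t2) + K2 * norm (x1 - x2) * (norm t1 + norm t2 + 1)"
    and m: "m > 0" and K: "K > 0"
    and A3: "\<forall>t1 t2 x. x \<in> X \<longrightarrow>
          (grad f t1 x - grad f t2 x) \<bullet> (t1 - t2) \<ge> m * (norm (t1 - t2))\<^sup>2 - K"
    and p_cont: "continuous_on UNIV p" and p_pos: "\<forall>z. p z > 0"
    and prob: "prob_space (density lborel p)"
    and mean0: "integrable (density lborel p) (\<lambda>z. z)"
               "(\<integral>z. z \<partial>(density lborel p)) = 0"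
    and var_fin: "integrable (density lborel p) (\<lambda>z. (norm z)\<^sup>2)"
    and xs_in: "\<forall>i\<in>{1..n}. xs i \<in> X"
    and b: "1 \<le> b" "b \<le> n"
    and minimizer: "\<forall>t. (1 / real n) * (\<Sum>i=1..n. f theta_star (xs i))
                        \<le> (1 / real n) * (\<Sum>i=1..n. f t (xs i))"
    and eta_pos: "\<eta> > 0"
    and eta: "\<eta> < min (1 / m) (m / (K1\<^sup>2 + 64 * D\<^sup>2 * K2\<^sup>2))"
  shows "\<forall>t. kernel_apply f xs n b \<eta> (density lborel p) (\<lambda>s. 1 + (norm (s - theta_star))\<^sup>2) t
     \<le> (1 - m * \<eta>) * (1 + (norm (t - theta_star))\<^sup>2) + 2 * m * \<eta> - \<eta>\<^sup>2 * K1\<^sup>2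
       - 56 * \<eta>\<^sup>2 * D\<^sup>2 * K2\<^sup>2 + 64 * \<eta>\<^sup>2 * D\<^sup>2 * K2\<^sup>2 * (norm theta_star)\<^sup>2
       + 2 * \<eta> * K + \<eta>\<^sup>2 * (\<integral>z. (norm z)\<^sup>2 \<partial>(density lborel p))"
proof (intro allI)
  fix t :: "real^'d"
  let ?S = "bsubsets n b" and ?g = "\<lambda>i. grad f t (xs i)" and ?r = "(norm (t - theta_star))\<^sup>2"
  let ?\<sigma> = "\<integral>z. (norm z)\<^sup>2 \<partial>(density lborel p)"
  define c where "c = 2 * D * K2 * (2 * norm t + 1)"
  have I: "finite {1..n}" "{1..n} \<noteq> {}"
    using b by auto
  have "(\<Sum>i=1..n. f theta_star (xs i)) \<le> (\<Sum>i=1..n. f t' (xs i))" for t'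
    using minimizer b by (auto simp: divide_le_cancel)
  then have critical: "(\<Sum>i=1..n. grad f theta_star (xs i)) = 0"
    using diff xs_in by (intro sum_grad_eq_0_if_minimum) auto
  have "average ?S (\<lambda>B. (norm (t - theta_star - \<eta> *\<^sub>R average B ?g))\<^sup>2)
      \<le> (1 - 2 * \<eta> * m + \<eta>\<^sup>2 * K1\<^sup>2) * ?r + 2 * \<eta> * K + \<eta>\<^sup>2 * c\<^sup>2"
    using norm_average_grad_sub_le[OF A1 bounded _ xs_in _ b(1)] K2 eta_pos
      norm_average_grad_le[OF A1 A3 I _ critical] inner_average_grad_ge[OF A1 A3 I _ critical] xs_in
    by (intro average_norm_sq_step_le finite_bsubsets bsubsets_nonempty b)
      (simp_all add: c_def average_bsubsets_average[OF b])
  moreover have "c\<^sup>2 \<le> 4 * D\<^sup>2 * K2\<^sup>2 * (16 * ?r + 16 * (norm theta_star)\<^sup>2 + 2)"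
    using two_norm_add_one_sq_le[of t theta_star] unfolding c_def
    by (simp add: power_mult_distrib mult_left_mono)
  then have "\<eta>\<^sup>2 * c\<^sup>2 \<le> \<eta>\<^sup>2 * (4 * D\<^sup>2 * K2\<^sup>2 * (16 * ?r + 16 * (norm theta_star)\<^sup>2 + 2))"
    by (simp add: mult_left_mono)
  moreover have "0 \<le> \<eta> * (1 + ?r) * (m - \<eta> * (K1\<^sup>2 + 64 * D\<^sup>2 * K2\<^sup>2))"
    using eta eta_pos K1 by (simp add: less_divide_eq add_pos_nonneg)
  moreover have "kernel_apply f xs n b \<eta> (density lborel p) (\<lambda>s. 1 + (norm (s - theta_star))\<^sup>2) t
      = 1 + average ?S (\<lambda>B. (norm (t - theta_star - \<eta> *\<^sub>R average B ?g))\<^sup>2) + \<eta>\<^sup>2 * ?\<sigma>"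
    using kernel_apply_sq_dist[OF prob _ mean0 var_fin b(2)] by simp
  ultimately show "kernel_apply f xs n b \<eta> (density lborel p) (\<lambda>s. 1 + (norm (s - theta_star))\<^sup>2) t
     \<le> (1 - m * \<eta>) * (1 + ?r) + 2 * m * \<eta> - \<eta>\<^sup>2 * K1\<^sup>2 - 56 * \<eta>\<^sup>2 * D\<^sup>2 * K2\<^sup>2
       + 64 * \<eta>\<^sup>2 * D\<^sup>2 * K2\<^sup>2 * (norm theta_star)\<^sup>2 + 2 * \<eta> * K + \<eta>\<^sup>2 * ?\<sigma>"
    by (simp add: algebra_simps power2_eq_square)
qed

end
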